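(* Consider the D2EAL algorithm (without periodic reset) described in the context, run for a horizon $T\ge1$ with learning parameters $\eta_\alpha>0,\eta_w>0$ on an arbitrary target sequence and arbitrary expert predictions, and fix an agent $i\in[N]$. Assume (Assumption 1) that $\Omega_i(t)\subseteq\Omega_i(t-1)$ for all $t=1,\dots,T$ (hence $\Lambda_i(t)\subseteq\Lambda_i(t-1)$). Then $$R_i^S(T):=\hat L_{T,i}-\min_{j\in\Lambda_i(T)}\bar L_{T,j}\le\frac{\eta_wT}{8}+\frac{\log d_i(0)}{\eta_w}.$$
   Context: Setup. There are $N\ge 1$ agents indexed by $i\in[N]$ and a horizon $T\ge1$. The outcome space $\mathcal Y$ and action space $\mathcal A$ are convex subsets of $\mathbb R^n$. The loss $l:\mathcal A\times\mathcal Y\to[0,1]$ is convex in its first argument. The target sequence $y_1,\dots,y_T\in\mathcal Y$ is arbitrary. For each agent $i$ and each $t\ge1$, an "expert" supplies an arbitrary prediction $f_{t,i}\in\mathcal A$ of $y_t$ (available at time $t-1$). Agents communicate over a time-varying undirected graph; $\Omega_i(t)$ is the set of neighbours of agent $i$ at time $t$, $\Lambda_i(t):=\Omega_i(t)\cup\{i\}$ and $d_i(t):=|\Lambda_i(t)|$. D2EAL (without periodic reset). Initialize $\hat f_{0,i}=f_{1,i}$, $\hat\alpha_i(0)=\hat\alpha'_i(0)=\hat w_{ii}(0)=1$ for all $i$. For $t=0,1,\dots,T-1$, each agent $i$ computes: $\alpha_i(t)=\hat\alpha_i(t)/(\hat\alpha_i(t)+\hat\alpha'_i(t))$; individual prediction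 $\bar f_{t+1,i}=\alpha_i(t)f_{t+1,i}+(1-\alpha_i(t))\hat f_{t,i}$; social weights $w_{ij}(t)=\hat w_{jj}(t)/\sum_{j'\in\Lambda_i(t)}\hat w_{j'j'}(t)$ for $j\in\Lambda_i(t)$ and $w_{ij}(t)=0$ otherwise; social prediction $\hat f_{t+1,i}=\sum_{j\in\Lambda_i(t)}w_{ij}(t)\bar f_{t+1,j}$. After $y_{t+1}$ is revealed, define the losses $l_{t+1,i}=l(f_{t+1,i},y_{t+1})$, $\hat l^-_{t+1,i}=l(\hat f_{t,i},y_{t+1})$, $\bar l_{t+1,i}=l(\bar f_{t+1,i},y_{t+1})$, $\hat l_{t+1,i}=l(\hat f_{t+1,i},y_{t+1})$, and update $\hat\alpha_i(t+1)=\hat\alpha_i(t)e^{-\eta_\alpha l_{t+1,i}}$, $\hat\alpha'_i(t+1)=\hat\alpha'_i(t)e^{-\eta_\alpha \hat l^-_{t+1,i}}$, $\hat w_{ii}(t+1)=\hat w_{ii}(t)e^{-\eta_w\bar l_{t+1,i}}$. Cumulative losses: $L_{T,i}=\sum_{t=1}^T l_{t,i}$, $\hat L^-_{T,i}=\sum_{t=1}^T\hat l^-_{t,i}$, $\bar L_{T,i}=\sum_{t=1}^T\bar l_{t,i}$, $\hat L_{T,i}=\sum_{t=1}^T\hat l_{t,i}$. *)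

theory Defs
  imports "HOL-Analysis.Analysis"
begin

text \<open>Agents are natural numbers (agent i in [N] is i < N).
  Om t j is the neighbour set Omega_j(t); Lam Om t j = Lambda_j(t) = Omega_j(t) \<union> {j}.
  f t j is the expert prediction f_{t,j}; y t is the target y_t; l is the loss.
  The state at time t is (hat alpha(t), hat alpha'(t), hat w_jj(t), hat f_{t,.}).\<close>

definition Lam :: "(nat \<Rightarrow> nat \<Rightarrow> nat set) \<Rightarrow> nat \<Rightarrow> nat \<Rightarrow> nat set" where
  "Lam Om t j = insert j (Om t j)"

primrec d2eal_state ::
  "real \<Rightarrow> real \<Rightarrow> ('a::real_vector \<Rightarrow> 'b \<Rightarrow> real) \<Rightarrow> (nat \<Rightarrow> nat \<Rightarrow> 'a) \<Rightarrow> (nat \<Rightarrow> 'b)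
   \<Rightarrow> (nat \<Rightarrow> nat \<Rightarrow> nat set) \<Rightarrow> nat
   \<Rightarrow> (nat \<Rightarrow> real) \<times> (nat \<Rightarrow> real) \<times> (nat \<Rightarrow> real) \<times> (nat \<Rightarrow> 'a)" where
  "d2eal_state ea ew l f y Om 0 = ((\<lambda>i. 1), (\<lambda>i. 1), (\<lambda>i. 1), (\<lambda>i. f 1 i))"
| "d2eal_state ea ew l f y Om (Suc t) =
    (case d2eal_state ea ew l f y Om t of (ha, ha', hw, hf) \<Rightarrow>
      let alpha = (\<lambda>i. ha i / (ha i + ha' i));
          fbar = (\<lambda>i. alpha i *\<^sub>R f (Suc t) i + (1 - alpha i) *\<^sub>R hf i);
          wgt = (\<lambda>i j. if j \<in> Lam Om t i then hw j / (\<Sum>j'\<in>Lam Om t i. hw j') else 0);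
          hf' = (\<lambda>i. \<Sum>j\<in>Lam Om t i. wgt i j *\<^sub>R fbar j)
      in ((\<lambda>i. ha i * exp (- ea * l (f (Suc t) i) (y (Suc t)))),
          (\<lambda>i. ha' i * exp (- ea * l (hf i) (y (Suc t)))),
          (\<lambda>i. hw i * exp (- ew * l (fbar i) (y (Suc t)))),
          hf'))"

definition d2eal_alpha where
  "d2eal_alpha ea ew l f y Om t i =
     (case d2eal_state ea ew l f y Om t of (ha, ha', hw, hf) \<Rightarrow> ha i / (ha i + ha' i))"

definition d2eal_hatf where
  "d2eal_hatf ea ew l f y Om t i =
     (case d2eal_state ea ew l f y Om t of (ha, ha', hw, hf) \<Rightarrow> hf i)"

text \<open>d2eal_barf ... t i is bar f_{t+1,i} (computed at time t).\<close>
definition d2eal_barf where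
  "d2eal_barf ea ew l f y Om t i =
     d2eal_alpha ea ew l f y Om t i *\<^sub>R f (Suc t) i
     + (1 - d2eal_alpha ea ew l f y Om t i) *\<^sub>R d2eal_hatf ea ew l f y Om t i"

definition hatL where
  "hatL ea ew l f y Om T i = (\<Sum>t=1..T. l (d2eal_hatf ea ew l f y Om t i) (y t))"

definition barL where
  "barL ea ew l f y Om T i = (\<Sum>t=1..T. l (d2eal_barf ea ew l f y Om (t - 1) i) (y t))"

end

theory Submission
  imports Defs "HOL-Probability.Hoeffding"
begin

text \<open>Every agent's weight \<open>hat w_kk(t)\<close> equals \<open>exp (- eta_w * bar L_{t,k})\<close>, so the social
  prediction of agent i is the exponentially weighted average, over its closed neighbourhood, of the
  individual predictions, and by convexity its loss is at most the weighted average of their losses.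
  The potential \<open>W(t) = \<Sum>k \<in> Lambda_i(t). exp (- eta_w * bar L_{t,k})\<close> therefore satisfies
  \<open>W(t+1) \<le> W(t) exp (- eta_w * hat l_{t+1,i} + eta_w^2/8)\<close> by Hoeffding's lemma; shrinking
  neighbourhoods (Assumption 1) only drop nonnegative terms. Comparing \<open>W(T) \<ge> exp (- eta_w * bar L_{T,j})\<close>
  with \<open>W(0) = d_i(0)\<close> gives the bound.\<close>

lemma Hoeffding_two_point:
  fixes m e :: real
  assumes "0 \<le> m" "m \<le> 1" "0 \<le> e"
  shows "1 - m + m * exp (- e) \<le> exp (- e * m + e\<^sup>2 / 8)"
proof -
  have pos: "1 + (1 - m) * (exp e - 1) > 0"
    using assms by (intro add_pos_nonneg mult_nonneg_nonneg) auto
  have "1 - m + m * exp (- e) = exp (- e) * (1 + (1 - m) * (exp e - 1))"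
    by (simp add: exp_minus field_simps)
  also have "\<dots> = exp (- e + ln (1 + (1 - m) * (exp e - 1)))"
    using pos by (simp add: exp_diff exp_minus field_simps)
  also have "\<dots> \<le> exp (- e * m + e\<^sup>2 / 8)"
    using Hoeffdings_lemma_aux[of e "1 - m"] assms by (simp add: algebra_simps)
  finally show ?thesis .
qed

lemma Hoeffding_weighted_exp:
  fixes p x :: "'k \<Rightarrow> real" and e :: real
  assumes "finite S" "\<And>k. k \<in> S \<Longrightarrow> 0 \<le> p k" "(\<Sum>k\<in>S. p k) = 1"
    and "\<And>k. k \<in> S \<Longrightarrow> 0 \<le> x k \<and> x k \<le> 1" "0 \<le> e"
  shows "(\<Sum>k\<in>S. p k * exp (- e * x k)) \<le> exp (- e * (\<Sum>k\<in>S. p k * x k) + e\<^sup>2 / 8)"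
proof -
  define m where "m = (\<Sum>k\<in>S. p k * x k)"
  have chord: "exp (- e * x k) \<le> 1 - x k + x k * exp (- e)" if "k \<in> S" for k
    using convex_onD[OF convex_on_exp[OF \<open>0 \<le> e\<close>], of "x k" 0 "-1"] assms(4)[OF that] by auto
  have "m \<le> (\<Sum>k\<in>S. p k)"
    unfolding m_def using assms by (intro sum_mono) (simp add: mult_left_le)
  then have m_bounds: "0 \<le> m" "m \<le> 1"
    using assms by (auto simp: m_def intro: sum_nonneg)
  have "(\<Sum>k\<in>S. p k * exp (- e * x k)) \<le> (\<Sum>k\<in>S. p k * (1 - x k + x k * exp (- e)))"
    by (intro sum_mono mult_left_mono chord assms(2))
  also have "\<dots> = 1 - m + m * exp (- e)"
    using assms(3) by (simp add: m_def algebra_simps sum.distrib sum_subtractf sum_distrib_right sum_distrib_left)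
  also have "\<dots> \<le> exp (- e * m + e\<^sup>2 / 8)"
    using Hoeffding_two_point m_bounds \<open>0 \<le> e\<close> by blast
  finally show ?thesis by (simp add: m_def)
qed

locale exp_weights =
  fixes e :: real and T :: nat and S :: "nat \<Rightarrow> 'k set"
    and L :: "nat \<Rightarrow> 'k \<Rightarrow> real" and Lh :: "nat \<Rightarrow> real"
  assumes e_pos: "0 < e"
    and finite_S0: "finite (S 0)"
    and S_decreasing: "t < T \<Longrightarrow> S (Suc t) \<subseteq> S t"
    and L_0: "L 0 k = 0"
    and Lh_0: "Lh 0 = 0"
    and loss_increment_bounds:
      "t < T \<Longrightarrow> k \<in> S t \<Longrightarrow> 0 \<le> L (Suc t) k - L t k \<and> L (Suc t) k - L t k \<le> 1"
    and learner_increment_le: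
      "t < T \<Longrightarrow> Lh (Suc t) - Lh t
         \<le> (\<Sum>k\<in>S t. exp (- e * L t k) * (L (Suc t) k - L t k)) / (\<Sum>k\<in>S t. exp (- e * L t k))"
begin

definition potential :: "nat \<Rightarrow> real" where
  "potential t = (\<Sum>k\<in>S t. exp (- e * L t k))"

lemma finite_S: "t \<le> T \<Longrightarrow> finite (S t)"
proof (induction t)
  case (Suc t)
  then show ?case using S_decreasing finite_subset by (metis Suc_le_lessD less_imp_le)
qed (use finite_S0 in simp)

lemma S_subset_S0: "t \<le> T \<Longrightarrow> S t \<subseteq> S 0"
proof (induction t)
  case (Suc t)
  then show ?case using S_decreasing by (meson Suc_le_lessD less_imp_le order_trans)
qed simp

lemma potential_Suc_le:
  assumes "t < T"
  shows "potential (Suc t) \<le> potential t * exp (- e * (Lh (Suc t) - Lh t) + e\<^sup>2 / 8)"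
proof (cases "S t = {}")
  case True
  then show ?thesis using S_decreasing[OF assms] by (simp add: potential_def)
next
  case False
  have fin: "finite (S t)" using finite_S assms by simp
  have pos: "0 < potential t"
    unfolding potential_def using fin False by (intro sum_pos) auto
  define w where "w k = exp (- e * L t k) / potential t" for k
  define x where "x k = L (Suc t) k - L t k" for k
  have w_sum: "(\<Sum>k\<in>S t. w k) = 1"
    using pos by (simp add: w_def potential_def sum_divide_distrib[symmetric])
  have "potential (Suc t) \<le> (\<Sum>k\<in>S t. exp (- e * L (Suc t) k))"
    unfolding potential_def by (intro sum_mono2 fin S_decreasing assms) auto
  also have "\<dots> = potential t * (\<Sum>k\<in>S t. w k * exp (- e * x k))"
    using pos by (simp add: w_def x_def sum_distrib_left field_simps flip: exp_add)
  also have "\<dots> \<le> potential t * exp (- e * (\<Sum>k\<in>S t. w k * x k) + e\<^sup>2 / 8)"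
    using pos e_pos loss_increment_bounds[OF assms] w_sum fin
    by (intro mult_left_mono Hoeffding_weighted_exp) (auto simp: w_def x_def)
  also have "\<dots> \<le> potential t * exp (- e * (Lh (Suc t) - Lh t) + e\<^sup>2 / 8)"
  proof -
    have "(\<Sum>k\<in>S t. w k * x k) = (\<Sum>k\<in>S t. exp (- e * L t k) * x k) / potential t"
      by (simp add: w_def sum_divide_distrib)
    then have "Lh (Suc t) - Lh t \<le> (\<Sum>k\<in>S t. w k * x k)"
      using learner_increment_le[OF assms] by (simp add: x_def potential_def)
    then show ?thesis using pos e_pos by (intro mult_left_mono) auto
  qed
  finally show ?thesis .
qed

lemma potential_le: "t \<le> T \<Longrightarrow> potential t \<le> card (S 0) * exp (- e * Lh t + t * e\<^sup>2 / 8)"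
proof (induction t)
  case 0
  then show ?case by (simp add: potential_def L_0 Lh_0)
next
  case (Suc t)
  then have "potential (Suc t) \<le> potential t * exp (- e * (Lh (Suc t) - Lh t) + e\<^sup>2 / 8)"
    by (intro potential_Suc_le) simp
  also have "\<dots> \<le> card (S 0) * exp (- e * Lh t + t * e\<^sup>2 / 8) * exp (- e * (Lh (Suc t) - Lh t) + e\<^sup>2 / 8)"
    using Suc by (intro mult_right_mono) auto
  also have "\<dots> = card (S 0) * exp (- e * Lh (Suc t) + Suc t * e\<^sup>2 / 8)"
    by (simp add: mult.assoc algebra_simps flip: exp_add)
  finally show ?case .
qed

lemma regret_le:
  assumes "j \<in> S T"
  shows "Lh T - L T j \<le> e * T / 8 + ln (card (S 0)) / e"
proof -
  have "0 < card (S 0)"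
    using S_subset_S0[of T] assms finite_S0 card_gt_0_iff by blast
  have "exp (- e * L T j) \<le> potential T"
    unfolding potential_def using finite_S assms by (intro member_le_sum) auto
  also have "\<dots> \<le> card (S 0) * exp (- e * Lh T + T * e\<^sup>2 / 8)"
    by (rule potential_le) simp
  also have "\<dots> = exp (ln (card (S 0)) - e * Lh T + T * e\<^sup>2 / 8)"
    using \<open>0 < card (S 0)\<close> by (simp add: exp_add exp_diff)
  finally have "e * (Lh T - L T j) \<le> e * (e * T / 8 + ln (card (S 0)) / e)"
    using e_pos by (simp add: algebra_simps power2_eq_square)
  then show ?thesis using e_pos by simp
qed

lemma regret_Min_le:
  assumes "S T \<noteq> {}"
  shows "Lh T - Min (L T ` S T) \<le> e * T / 8 + ln (card (S 0)) / e"
proof -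
  have "Min (L T ` S T) \<in> L T ` S T"
    using finite_S assms by (intro Min_in) auto
  then obtain j where "j \<in> S T" "Min (L T ` S T) = L T j"
    by blast
  then show ?thesis using regret_le by simp
qed

end

locale d2eal =
  fixes ea ew :: real and l :: "'a::real_vector \<Rightarrow> 'b \<Rightarrow> real"
    and f :: "nat \<Rightarrow> nat \<Rightarrow> 'a" and y :: "nat \<Rightarrow> 'b" and Om :: "nat \<Rightarrow> nat \<Rightarrow> nat set"
begin

abbreviation "alpha \<equiv> d2eal_alpha ea ew l f y Om"
abbreviation "hatf \<equiv> d2eal_hatf ea ew l f y Om"
abbreviation "barf \<equiv> d2eal_barf ea ew l f y Om"

definition hat_alpha :: "nat \<Rightarrow> nat \<Rightarrow> real" where
  "hat_alpha t = fst (d2eal_state ea ew l f y Om t)"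

definition hat_alpha' :: "nat \<Rightarrow> nat \<Rightarrow> real" where
  "hat_alpha' t = fst (snd (d2eal_state ea ew l f y Om t))"

definition hat_w :: "nat \<Rightarrow> nat \<Rightarrow> real" where
  "hat_w t = fst (snd (snd (d2eal_state ea ew l f y Om t)))"

lemma hatf_0: "hatf 0 j = f 1 j"
  by (simp add: d2eal_hatf_def)

lemma alpha_eq: "alpha t j = hat_alpha t j / (hat_alpha t j + hat_alpha' t j)"
  by (cases "d2eal_state ea ew l f y Om t") (simp add: d2eal_alpha_def hat_alpha_def hat_alpha'_def)

lemma hat_alpha_pos: "0 < hat_alpha t j"
  by (induction t) (auto simp: hat_alpha_def Let_def split: prod.split)

lemma hat_alpha'_pos: "0 < hat_alpha' t j"
  by (induction t) (auto simp: hat_alpha'_def Let_def split: prod.split)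

lemma alpha_bounds: "0 \<le> alpha t j" "alpha t j \<le> 1"
  using hat_alpha_pos[of t j] hat_alpha'_pos[of t j] by (simp_all add: alpha_eq)

lemma hat_w_Suc: "hat_w (Suc t) j = hat_w t j * exp (- ew * l (barf t j) (y (Suc t)))"
  by (cases "d2eal_state ea ew l f y Om t")
    (simp add: hat_w_def d2eal_hatf_def d2eal_barf_def d2eal_alpha_def Let_def)

lemma hatf_Suc:
  "hatf (Suc t) j = (\<Sum>k\<in>Lam Om t j. (hat_w t k / (\<Sum>k'\<in>Lam Om t j. hat_w t k')) *\<^sub>R barf t k)"
  by (cases "d2eal_state ea ew l f y Om t")
    (auto simp: hat_w_def d2eal_hatf_def d2eal_barf_def d2eal_alpha_def Let_def intro!: sum.cong)

lemma barL_Suc: "barL ea ew l f y Om (Suc t) j = barL ea ew l f y Om t j + l (barf t j) (y (Suc t))"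
  by (simp add: barL_def)

lemma hatL_Suc: "hatL ea ew l f y Om (Suc t) j = hatL ea ew l f y Om t j + l (hatf (Suc t) j) (y (Suc t))"
  by (simp add: hatL_def)

lemma hat_w_eq_exp: "hat_w t j = exp (- ew * barL ea ew l f y Om t j)"
proof (induction t)
  case 0
  then show ?case by (simp add: hat_w_def barL_def)
next
  case (Suc t)
  then show ?case by (simp add: hat_w_Suc barL_Suc algebra_simps flip: exp_add)
qed

end

locale d2eal_convex = d2eal +
  fixes A :: "'a set" and N :: nat
  assumes convex_A: "convex A"
    and experts_in_A: "\<And>t j. 1 \<le> t \<Longrightarrow> j < N \<Longrightarrow> f t j \<in> A"
    and neighbours_bounded: "\<And>t j. j < N \<Longrightarrow> Om t j \<subseteq> {..<N}"
begin

lemma Lam_subset: "j < N \<Longrightarrow> Lam Om t j \<subseteq> {..<N}"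
  using neighbours_bounded by (auto simp: Lam_def)

lemma finite_Lam: "j < N \<Longrightarrow> finite (Lam Om t j)"
  using Lam_subset finite_subset by blast

lemma social_weights:
  assumes "j < N"
  shows "0 \<le> hat_w t k / (\<Sum>k'\<in>Lam Om t j. hat_w t k')"
    and "(\<Sum>k\<in>Lam Om t j. hat_w t k / (\<Sum>k'\<in>Lam Om t j. hat_w t k')) = 1"
proof -
  have "0 < (\<Sum>k'\<in>Lam Om t j. hat_w t k')"
    using finite_Lam[OF assms] by (intro sum_pos) (auto simp: Lam_def hat_w_eq_exp)
  then show "0 \<le> hat_w t k / (\<Sum>k'\<in>Lam Om t j. hat_w t k')"
    and "(\<Sum>k\<in>Lam Om t j. hat_w t k / (\<Sum>k'\<in>Lam Om t j. hat_w t k')) = 1"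
    by (simp_all add: hat_w_eq_exp sum_divide_distrib[symmetric])
qed

lemma barf_in_A: "j < N \<Longrightarrow> hatf t j \<in> A \<Longrightarrow> barf t j \<in> A"
  unfolding d2eal_barf_def
  using alpha_bounds by (intro convexD[OF convex_A] experts_in_A) auto

lemma predictions_in_A: "j < N \<Longrightarrow> hatf t j \<in> A \<and> barf t j \<in> A"
proof (induction t arbitrary: j)
  case 0
  then show ?case using barf_in_A experts_in_A by (simp add: hatf_0)
next
  case (Suc t)
  have "hatf (Suc t) j \<in> A"
    unfolding hatf_Suc using Suc Lam_subset social_weights
    by (intro convex_sum[OF finite_Lam convex_A]) auto
  then show ?case using barf_in_A Suc by blast
qed

lemma social_loss_le:
  assumes "j < N" and "convex_on A (\<lambda>a. l a (y (Suc t)))"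
  shows "l (hatf (Suc t) j) (y (Suc t))
    \<le> (\<Sum>k\<in>Lam Om t j. exp (- ew * barL ea ew l f y Om t k) * l (barf t k) (y (Suc t)))
       / (\<Sum>k\<in>Lam Om t j. exp (- ew * barL ea ew l f y Om t k))"
proof -
  define w where "w k = hat_w t k / (\<Sum>k'\<in>Lam Om t j. hat_w t k')" for k
  have "l (hatf (Suc t) j) (y (Suc t)) = l (\<Sum>k\<in>Lam Om t j. w k *\<^sub>R barf t k) (y (Suc t))"
    by (simp add: hatf_Suc w_def)
  also have "\<dots> \<le> (\<Sum>k\<in>Lam Om t j. w k * l (barf t k) (y (Suc t)))"
    using social_weights[OF assms(1)] predictions_in_A Lam_subset[OF assms(1)]
    by (intro convex_on_sum[OF finite_Lam[OF assms(1)] _ assms(2)]) (auto simp: w_def Lam_def subset_iff)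
  finally show ?thesis
    by (simp add: w_def hat_w_eq_exp sum_divide_distrib)
qed

end

theorem lemma2:
  fixes N T i :: nat
    and eta_a eta_w :: real
    and A Y :: "(real ^ 'n) set"
    and l :: "real ^ 'n \<Rightarrow> real ^ 'n \<Rightarrow> real"
    and f :: "nat \<Rightarrow> nat \<Rightarrow> real ^ 'n"
    and y :: "nat \<Rightarrow> real ^ 'n"
    and Om :: "nat \<Rightarrow> nat \<Rightarrow> nat set"
  assumes "convex A" and "convex Y"
    and loss_range: "\<And>a b. a \<in> A \<Longrightarrow> b \<in> Y \<Longrightarrow> 0 \<le> l a b \<and> l a b \<le> 1"
    and loss_convex: "\<And>b. b \<in> Y \<Longrightarrow> convex_on A (\<lambda>a. l a b)"
    and targets: "\<And>t. y t \<in> Y"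
    and experts: "\<And>t j. 1 \<le> t \<Longrightarrow> j < N \<Longrightarrow> f t j \<in> A"
    and graph_sub: "\<And>t j. j < N \<Longrightarrow> Om t j \<subseteq> {..<N}"
    and graph_irrefl: "\<And>t j. j \<notin> Om t j"
    and graph_sym: "\<And>t j k. j < N \<Longrightarrow> k < N \<Longrightarrow> k \<in> Om t j \<longleftrightarrow> j \<in> Om t k"
    and "1 \<le> T" and "eta_a > 0" and "eta_w > 0"
    and "i < N"
    and assumption1: "\<And>t. 1 \<le> t \<Longrightarrow> t \<le> T \<Longrightarrow> Om t i \<subseteq> Om (t - 1) i"
  shows "hatL eta_a eta_w l f y Om T i
           - Min ((\<lambda>j. barL eta_a eta_w l f y Om T j) ` Lam Om T i)
         \<le> eta_w * real T / 8 + ln (real (card (Lam Om 0 i))) / eta_w"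
proof -
  interpret d2eal_convex eta_a eta_w l f y Om A N
    using \<open>convex A\<close> experts graph_sub by unfold_locales
  interpret exp_weights eta_w T "\<lambda>t. Lam Om t i" "barL eta_a eta_w l f y Om"
    "\<lambda>t. hatL eta_a eta_w l f y Om t i"
  proof
    show "finite (Lam Om 0 i)" using finite_Lam \<open>i < N\<close> .
    show "Lam Om (Suc t) i \<subseteq> Lam Om t i" if "t < T" for t
      using assumption1[of "Suc t"] that by (auto simp: Lam_def)
    show "0 \<le> barL eta_a eta_w l f y Om (Suc t) k - barL eta_a eta_w l f y Om t k
        \<and> barL eta_a eta_w l f y Om (Suc t) k - barL eta_a eta_w l f y Om t k \<le> 1"
      if "k \<in> Lam Om t i" for t k
    proof -
      have "barf t k \<in> A"
        using Lam_subset[OF \<open>i < N\<close>] that predictions_in_A by blast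
      then show ?thesis using loss_range targets by (simp add: barL_Suc)
    qed
    show "hatL eta_a eta_w l f y Om (Suc t) i - hatL eta_a eta_w l f y Om t i
        \<le> (\<Sum>k\<in>Lam Om t i. exp (- eta_w * barL eta_a eta_w l f y Om t k)
            * (barL eta_a eta_w l f y Om (Suc t) k - barL eta_a eta_w l f y Om t k))
          / (\<Sum>k\<in>Lam Om t i. exp (- eta_w * barL eta_a eta_w l f y Om t k))" for t
      using social_loss_le[OF \<open>i < N\<close> loss_convex[OF targets]] by (simp add: hatL_Suc barL_Suc)
  qed (use \<open>eta_w > 0\<close> in \<open>simp_all add: barL_def hatL_def\<close>)
  show ?thesis
    using regret_Min_le by (simp add: Lam_def)
qed

end
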